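(* Let $h\in\mathbb{F}[x]$ with $\deg h\ge1$. Then: (i) every $\omega\in\mathrm{Aut}_{\mathbb{F}}(A_h)$ can be written $\omega=\phi_f\circ\tau_{\alpha,\beta}$ for some $(\alpha,\beta)\in\mathbb{P}$ and $f\in\mathbb{F}[x]$; (ii) for $(\alpha,\beta)\in\mathbb{P}$ and $f\in\mathbb{F}[x]$, $\tau_{\alpha,\beta}=\phi_f$ if and only if $\alpha=1$, $\beta=0$ and $f=0$; (iii) if $(\alpha,\beta)\in\mathbb{P}$, $\alpha\ne1$ and $\alpha^\ell=1$ for some $\ell\ge2$, then $\tau_{\alpha,\beta}^\ell=\mathrm{id}_{A_h}$; (iv) the abelian group $\{\phi_f: f\in\mathbb{F}[x]\}$, isomorphic to $(\mathbb{F}[x],+)$ via $f\mapsto\phi_f$, is a normal subgroup of $\mathrm{Aut}_{\mathbb{F}}(A_h)$; (v) $\tau_{\mathbb{P}}=\{\tau_{\alpha,\beta}:(\alpha,\beta)\in\mathbb{P}\}$ is a subgroup of $\mathrm{Aut}_{\mathbb{F}}(A_h)$ and $\mathrm{Aut}_{\mathbb{F}}(A_h)=\{\phi_f:f\in\mathbb{F}[x]\}\rtimes\tau_{\mathbb{P}}$.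
   Context: $\mathbb{F}$ is an arbitrary field. For $h\in\mathbb{F}[x]$, $A_h$ is the unital associative $\mathbb{F}$-algebra generated by $x,\hat y$ with defining relation $\hat yx-x\hat y=h$. Let $\mathbb{P}=\{(\alpha,\beta)\in\mathbb{F}^*\times\mathbb{F}: h(\alpha x+\beta)=\alpha^{\deg h}h(x)\}$. For $(\alpha,\beta)\in\mathbb{P}$, $\tau_{\alpha,\beta}$ is the automorphism of $A_h$ with $\tau_{\alpha,\beta}(x)=\alpha x+\beta$, $\tau_{\alpha,\beta}(\hat y)=\alpha^{\deg h-1}\hat y$. For $f\in\mathbb{F}[x]$, $\phi_f$ is the automorphism with $\phi_f(x)=x$, $\phi_f(\hat y)=\hat y+f$. *)

theory Defs
  imports "HOL-Computational_Algebra.Polynomial" "HOL-Algebra.Coset"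
begin

text \<open>Concrete model of A_h: the Ore extension F[x][y; delta] with delta = h * d/dx.
An element is a polynomial in y with coefficients in F[x] written on the left:
  sum_i a_i(x) y^i  is represented by the 'a poly poly with coeff i = a_i.
The relation y p = p y + h p' gives
  y^n p = sum_k (n choose k) delta^k(p) y^(n-k).\<close>

definition ah_delta :: "'a::field poly \<Rightarrow> 'a poly \<Rightarrow> 'a poly" where
  "ah_delta h p = h * pderiv p"

definition ah_mult :: "'a::field poly \<Rightarrow> 'a poly poly \<Rightarrow> 'a poly poly \<Rightarrow> 'a poly poly" where
  "ah_mult h a b =
     (\<Sum>i\<le>degree a. \<Sum>j\<le>degree b. \<Sum>k\<le>i.
        monom (coeff a i * smult (of_nat (i choose k)) ((ah_delta h ^^ k) (coeff b j))) (i - k + j))"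

definition ah_x :: "'a::field poly poly" where "ah_x = [: [:0, 1:] :]"
definition ah_y :: "'a::field poly poly" where "ah_y = monom 1 1"
definition ah_const :: "'a::field poly \<Rightarrow> 'a poly poly" where "ah_const f = [: f :]"
definition ah_scal :: "'a::field \<Rightarrow> 'a poly poly \<Rightarrow> 'a poly poly" where "ah_scal c a = smult [:c:] a"

definition is_aut :: "'a::field poly \<Rightarrow> ('a poly poly \<Rightarrow> 'a poly poly) \<Rightarrow> bool" where
  "is_aut h w \<longleftrightarrow> bij w \<and> w 1 = 1
     \<and> (\<forall>a b. w (a + b) = w a + w b)
     \<and> (\<forall>c a. w (ah_scal c a) = ah_scal c (w a))
     \<and> (\<forall>a b. w (ah_mult h a b) = ah_mult h (w a) (w b))"

definition Aut_group :: "'a::field poly \<Rightarrow> ('a poly poly \<Rightarrow> 'a poly poly) monoid" where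
  "Aut_group h = \<lparr>carrier = {w. is_aut h w}, monoid.mult = (\<lambda>f g. f \<circ> g), one = id\<rparr>"

definition Pset :: "'a::field poly \<Rightarrow> ('a \<times> 'a) set" where
  "Pset h = {(\<alpha>, \<beta>). \<alpha> \<noteq> 0 \<and> pcompose h [:\<beta>, \<alpha>:] = smult (\<alpha> ^ degree h) h}"

definition tau :: "'a::field poly \<Rightarrow> 'a \<Rightarrow> 'a \<Rightarrow> ('a poly poly \<Rightarrow> 'a poly poly)" where
  "tau h \<alpha> \<beta> = (THE w. is_aut h w \<and> w ah_x = ah_const [:\<beta>, \<alpha>:]
                      \<and> w ah_y = ah_scal (\<alpha> ^ (degree h - 1)) ah_y)"

definition phi :: "'a::field poly \<Rightarrow> 'a poly \<Rightarrow> ('a poly poly \<Rightarrow> 'a poly poly)" where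
  "phi h f = (THE w. is_aut h w \<and> w ah_x = ah_x \<and> w ah_y = ah_y + ah_const f)"

end

theory Submission
  imports Defs
begin

(*
  Plan.
  1. Left multiplication by y is the operator  ymul h b = y*b + delta(b)  on coefficients;
     the product of Defs is  a * b = sum_i a_i (ymul h)^i b.  From this normal form we derive
     the ring laws (associativity, units, distributivity), that products are congruent to the
     commutative product modulo h, and that the y-degree is additive (A_h is a domain).
  2. An algebra homomorphism is determined by the images of x and y, and it acts on F[x] by
     composition with the image of x.  Conversely (universal property), any E : F[x] -> A_h
     together with Y satisfying  Y E(p) = E(p) Y + E(delta p)  extends to a homomorphism.
     This yields phi_f and tau_{alpha,beta}, their composition laws, and that they are
     automorphisms; hence they coincide with the THE-descriptions of Defs.
  3. Classification: an automorphism w maps h to a nonzero scalar multiple of h (commutators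
     lie in hA_h), hence w x has y-degree 0, is affine, and w x = alpha x + beta with
     (alpha, beta) in P.  An automorphism fixing x is some phi_g (degree count plus the
     defining relation).
  4. Parts (i)-(v) follow: w = phi_g o tau, the phi's form an abelian normal subgroup, the tau's
     a complementary subgroup.
*)

lemma delta_add: "ah_delta h (p + q) = ah_delta h p + ah_delta h q"
  by (simp add: ah_delta_def pderiv_add distrib_left)

lemma delta_mult: "ah_delta h (p * q) = p * ah_delta h q + ah_delta h p * q"
  by (simp add: ah_delta_def pderiv_mult algebra_simps)

lemma delta_const [simp]: "ah_delta h [:c:] = 0"
  by (simp add: ah_delta_def pderiv_pCons)

lemma delta_0 [simp]: "ah_delta h 0 = 0"
  by (simp add: ah_delta_def)

lemma delta_1 [simp]: "ah_delta h 1 = 0"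
  by (simp add: ah_delta_def)

text \<open>For admissible (\<alpha>, \<beta>) the substitution x \<mapsto> \<alpha>x + \<beta> intertwines \<delta> with
  \<alpha>^(deg h - 1) \<delta>: this is what makes tau a homomorphism.\<close>
lemma delta_pcompose:
  assumes "pcompose h [:\<beta>, \<alpha>:] = smult (\<alpha> ^ degree h) h" "degree h \<ge> 1"
  shows "smult (\<alpha> ^ (degree h - 1)) (ah_delta h (pcompose p [:\<beta>, \<alpha>:]))
       = pcompose (ah_delta h p) [:\<beta>, \<alpha>:]"
proof -
  have a: "\<alpha> ^ (degree h - 1) * \<alpha> = \<alpha> ^ degree h"
    using assms(2) by (cases "degree h") (simp_all add: mult.commute)
  have m: "q * [:\<alpha>:] = smult \<alpha> q" for q :: "'a poly" by simp
  show ?thesis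
    by (simp add: ah_delta_def pderiv_pcompose pcompose_mult assms(1) pderiv_pCons mult.assoc
        m a[symmetric])
qed

lemma smult_sum_right: "smult c (sum f A) = (\<Sum>i\<in>A. smult c (f i))"
  by (induction A rule: infinite_finite_induct) (auto simp: smult_add_right)

section \<open>Left multiplication by y and the normal form of the product\<close>

text \<open>y \<cdot> (\<Sum> b_j y^j) = \<Sum> b_j y^(j+1) + \<Sum> \<delta>(b_j) y^j.\<close>
definition ymul :: "'a::field poly \<Rightarrow> 'a poly poly \<Rightarrow> 'a poly poly" where
  "ymul h b = pCons 0 b + map_poly (ah_delta h) b"

lemma coeff_ymul:
  "coeff (ymul h b) n = (case n of 0 \<Rightarrow> 0 | Suc m \<Rightarrow> coeff b m) + ah_delta h (coeff b n)"
  by (simp add: ymul_def coeff_pCons coeff_map_poly split: nat.split)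

lemma ymul_add: "ymul h (a + b) = ymul h a + ymul h b"
  by (rule poly_eqI) (simp add: coeff_ymul delta_add split: nat.split)

lemma ymul_0 [simp]: "ymul h 0 = 0"
  by (rule poly_eqI) (simp add: coeff_ymul split: nat.split)

lemma ymul_smult: "ymul h (smult p b) = smult p (ymul h b) + smult (ah_delta h p) b"
  by (rule poly_eqI) (simp add: coeff_ymul delta_mult algebra_simps split: nat.split)

lemma ymul_monom: "ymul h (monom p n) = monom p (Suc n) + monom (ah_delta h p) n"
  by (rule poly_eqI) (simp add: coeff_ymul split: nat.split)

lemma ymul_of_nat: "ymul h (of_nat k * b) = of_nat k * ymul h b"
proof -
  have "of_nat k * c = smult [:of_nat k:] c" for c :: "'a poly poly"
    by (simp add: of_nat_poly)
  thus ?thesis by (simp add: ymul_smult)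
qed

lemma ymul_sum: "ymul h (sum f A) = (\<Sum>j\<in>A. ymul h (f j))"
  by (induction A rule: infinite_finite_induct) (auto simp: ymul_add)

lemma ymul_pow_0 [simp]: "(ymul h ^^ i) 0 = 0"
  by (induction i) auto

lemma ymul_pow_add: "(ymul h ^^ i) (a + b) = (ymul h ^^ i) a + (ymul h ^^ i) b"
  by (induction i) (auto simp: ymul_add)

lemma ymul_pow_sum: "(ymul h ^^ i) (sum f A) = (\<Sum>j\<in>A. (ymul h ^^ i) (f j))"
  by (induction A rule: infinite_finite_induct) (auto simp: ymul_pow_add)

lemma pascal_sum:
  fixes t :: "nat \<Rightarrow> 'b::comm_semiring_1"
  shows "(\<Sum>k\<le>Suc i. of_nat (Suc i choose k) * t k)
       = (\<Sum>k\<le>i. of_nat (i choose k) * t k) + (\<Sum>k\<le>i. of_nat (i choose k) * t (Suc k))"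
proof -
  have "(\<Sum>k\<le>Suc i. of_nat (Suc i choose k) * t k)
       = t 0 + (\<Sum>k\<le>i. (of_nat (i choose k) + of_nat (i choose Suc k)) * t (Suc k))"
    unfolding sum.atMost_Suc_shift by simp
  also have "\<dots> = (t 0 + (\<Sum>k\<le>i. of_nat (i choose Suc k) * t (Suc k)))
                   + (\<Sum>k\<le>i. of_nat (i choose k) * t (Suc k))"
    by (simp add: sum.distrib algebra_simps)
  also have "t 0 + (\<Sum>k\<le>i. of_nat (i choose Suc k) * t (Suc k))
           = (\<Sum>k\<le>Suc i. of_nat (i choose k) * t k)"
    by (subst sum.atMost_Suc_shift) simp
  also have "\<dots> = (\<Sum>k\<le>i. of_nat (i choose k) * t k)"
    by (simp add: binomial_eq_0)
  finally show ?thesis .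
qed

lemma ymul_pow_monom:
  "(ymul h ^^ i) (monom q j)
     = (\<Sum>k\<le>i. of_nat (i choose k) * monom ((ah_delta h ^^ k) q) (i - k + j))"
proof (induction i)
  case 0 then show ?case by simp
next
  case (Suc i)
  let ?t = "\<lambda>k. monom ((ah_delta h ^^ k) q) (Suc i - k + j)"
  have "(ymul h ^^ Suc i) (monom q j)
      = ymul h (\<Sum>k\<le>i. of_nat (i choose k) * monom ((ah_delta h ^^ k) q) (i - k + j))"
    using Suc by simp
  also have "\<dots> = (\<Sum>k\<le>i. of_nat (i choose k) * (monom ((ah_delta h ^^ k) q) (Suc (i - k + j))
                     + monom ((ah_delta h ^^ Suc k) q) (i - k + j)))"
    by (simp add: ymul_sum ymul_of_nat ymul_monom)
  also have "\<dots> = (\<Sum>k\<le>i. of_nat (i choose k) * ?t k) + (\<Sum>k\<le>i. of_nat (i choose k) * ?t (Suc k))"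
    by (simp add: sum.distrib distrib_left Suc_diff_le)
  also have "\<dots> = (\<Sum>k\<le>Suc i. of_nat (Suc i choose k) * ?t k)"
    by (rule pascal_sum[symmetric])
  finally show ?case .
qed

lemma ah_mult_ymul: "ah_mult h a b = (\<Sum>i\<le>degree a. smult (coeff a i) ((ymul h ^^ i) b))"
proof -
  have "smult (coeff a i) ((ymul h ^^ i) b) = (\<Sum>j\<le>degree b. \<Sum>k\<le>i.
        monom (coeff a i * smult (of_nat (i choose k)) ((ah_delta h ^^ k) (coeff b j))) (i - k + j))"
    for i
  proof -
    have monom_of_nat: "monom (p * smult (of_nat c) d) n = smult p (of_nat c * monom d n)"
      for p d :: "'a poly" and c n
      by (simp add: of_nat_poly smult_monom algebra_simps)
    have "(ymul h ^^ i) b = (ymul h ^^ i) (\<Sum>j\<le>degree b. monom (coeff b j) j)"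
      by (simp add: poly_as_sum_of_monoms)
    also have "\<dots> = (\<Sum>j\<le>degree b. \<Sum>k\<le>i.
                      of_nat (i choose k) * monom ((ah_delta h ^^ k) (coeff b j)) (i - k + j))"
      by (simp add: ymul_pow_sum ymul_pow_monom)
    finally show ?thesis by (simp only: smult_sum_right monom_of_nat)
  qed
  thus ?thesis unfolding ah_mult_def by simp
qed

lemma ah_mult_ymul_le:
  "degree a \<le> N \<Longrightarrow> ah_mult h a b = (\<Sum>i\<le>N. smult (coeff a i) ((ymul h ^^ i) b))"
  unfolding ah_mult_ymul by (rule sum.mono_neutral_left) (auto simp: coeff_eq_0)

lemma mult_add_left: "ah_mult h (a1 + a2) b = ah_mult h a1 b + ah_mult h a2 b"
proof -
  let ?N = "max (degree a1) (degree a2)"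
  have "degree (a1 + a2) \<le> ?N" by (rule degree_add_le_max)
  thus ?thesis by (simp add: ah_mult_ymul_le[of _ ?N] smult_add_left sum.distrib)
qed

lemma mult_add_right: "ah_mult h a (b1 + b2) = ah_mult h a b1 + ah_mult h a b2"
  by (simp add: ah_mult_ymul ymul_pow_add smult_add_right sum.distrib)

lemma mult_0_left [simp]: "ah_mult h 0 b = 0"
  by (simp add: ah_mult_ymul)

lemma mult_0_right [simp]: "ah_mult h a 0 = 0"
  by (simp add: ah_mult_ymul)

lemma mult_smult_left: "ah_mult h (smult p a) b = smult p (ah_mult h a b)"
proof -
  have "degree (smult p a) \<le> degree a" by (rule degree_smult_le)
  thus ?thesis by (simp add: ah_mult_ymul_le[of _ "degree a"] smult_sum_right)
qed

lemma mult_scal_left: "ah_mult h (ah_scal c a) b = ah_scal c (ah_mult h a b)"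
  by (simp add: ah_scal_def mult_smult_left)

lemma mult_sum_left: "ah_mult h (sum f A) b = (\<Sum>i\<in>A. ah_mult h (f i) b)"
  by (induction A rule: infinite_finite_induct) (auto simp: mult_add_left)

lemma mult_sum_right: "ah_mult h a (sum f A) = (\<Sum>i\<in>A. ah_mult h a (f i))"
  by (induction A rule: infinite_finite_induct) (auto simp: mult_add_right)

lemma mult_diff_right: "ah_mult h a (b1 - b2) = ah_mult h a b1 - ah_mult h a b2"
proof -
  have "ah_mult h a (- b) = - ah_mult h a b" for b
    using mult_add_right[of h a "-b" b] by (simp add: eq_neg_iff_add_eq_0)
  thus ?thesis using mult_add_right[of h a b1 "-b2"] by simp
qed

lemma mult_monom_left: "ah_mult h (monom p i) b = smult p ((ymul h ^^ i) b)"
proof -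
  have "ah_mult h (monom p i) b = (\<Sum>k\<le>i. smult (coeff (monom p i) k) ((ymul h ^^ k) b))"
    by (rule ah_mult_ymul_le) (simp add: degree_monom_le)
  also have "\<dots> = (\<Sum>k\<in>{i}. smult (coeff (monom p i) k) ((ymul h ^^ k) b))"
    by (rule sum.mono_neutral_right) auto
  finally show ?thesis by simp
qed

lemma ymul_mult: "ymul h (ah_mult h a b) = ah_mult h (ymul h a) b"
proof -
  have monom: "ymul h (ah_mult h (monom p i) b) = ah_mult h (ymul h (monom p i)) b" for p i
    by (simp add: mult_monom_left ymul_smult ymul_monom mult_add_left)
  have "ymul h (ah_mult h a b) = ymul h (ah_mult h (\<Sum>i\<le>degree a. monom (coeff a i) i) b)"
    by (simp add: poly_as_sum_of_monoms)
  also have "\<dots> = (\<Sum>i\<le>degree a. ah_mult h (ymul h (monom (coeff a i) i)) b)"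
    by (simp add: mult_sum_left ymul_sum monom)
  also have "\<dots> = ah_mult h (ymul h (\<Sum>i\<le>degree a. monom (coeff a i) i)) b"
    by (simp add: mult_sum_left ymul_sum)
  finally show ?thesis by (simp add: poly_as_sum_of_monoms)
qed

lemma mult_assoc: "ah_mult h (ah_mult h a b) c = ah_mult h a (ah_mult h b c)"
proof -
  have ymul_pow_mult: "(ymul h ^^ i) (ah_mult h b c) = ah_mult h ((ymul h ^^ i) b) c" for i
    by (induction i) (auto simp: ymul_mult)
  have monom: "ah_mult h (ah_mult h (monom p i) b) c = ah_mult h (monom p i) (ah_mult h b c)"
    for p i by (simp add: mult_monom_left mult_smult_left ymul_pow_mult)
  have "ah_mult h (ah_mult h a b) c = ah_mult h (ah_mult h (\<Sum>i\<le>degree a. monom (coeff a i) i) b) c"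
    by (simp add: poly_as_sum_of_monoms)
  also have "\<dots> = (\<Sum>i\<le>degree a. ah_mult h (monom (coeff a i) i) (ah_mult h b c))"
    by (simp add: mult_sum_left monom)
  also have "\<dots> = ah_mult h (\<Sum>i\<le>degree a. monom (coeff a i) i) (ah_mult h b c)"
    by (simp add: mult_sum_left)
  finally show ?thesis by (simp add: poly_as_sum_of_monoms)
qed

lemma ymul_pow_monom_one: "(ymul h ^^ i) (monom 1 j) = monom 1 (i + j)"
  by (induction i) (auto simp: ymul_monom)

lemma monom_one_0: "monom (1::'b::comm_semiring_1) 0 = 1"
  by (simp add: monom_0 one_pCons)

lemma mult_1_left [simp]: "ah_mult h 1 b = b"
  using mult_monom_left[of h 1 0 b] by (simp add: monom_one_0)

lemma mult_1_right [simp]: "ah_mult h a 1 = a"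
proof -
  have "ah_mult h a 1 = (\<Sum>i\<le>degree a. smult (coeff a i) (monom 1 i))"
    using ymul_pow_monom_one[where j=0 and h=h] by (simp add: ah_mult_ymul monom_one_0)
  thus ?thesis by (simp add: smult_monom poly_as_sum_of_monoms)
qed

lemma x_const: "ah_x = ah_const [:0, 1:]"
  by (simp add: ah_x_def ah_const_def)

lemma ah_const_add: "ah_const (p + q) = ah_const p + ah_const q"
  by (simp add: ah_const_def)

lemma const_monom: "ah_const p = monom p 0"
  by (simp add: ah_const_def monom_0)

lemma mult_const_left: "ah_mult h (ah_const p) b = smult p b"
  by (simp add: const_monom mult_monom_left)

lemma mult_const_const: "ah_mult h (ah_const p) (ah_const q) = ah_const (p * q)"
  unfolding mult_const_left by (simp add: ah_const_def)

lemma mult_y_left: "ah_mult h ah_y b = ymul h b"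
  by (simp add: ah_y_def mult_monom_left)

lemma mult_y_right: "ah_mult h a ah_y = pCons 0 a"
proof -
  have shift: "monom (1::'a poly) (Suc 0) * c = pCons 0 c" for c
    by (simp add: monom_Suc monom_0)
  have "ah_mult h a ah_y = (\<Sum>i\<le>degree a. monom 1 1 * monom (coeff a i) i)"
    using ymul_pow_monom_one[where j=1 and h=h]
    by (simp add: ah_mult_ymul ah_y_def smult_monom mult_monom)
  also have "\<dots> = monom 1 1 * a"
    by (simp add: sum_distrib_left[symmetric] poly_as_sum_of_monoms)
  finally show ?thesis by (simp add: shift)
qed

text \<open>Every element is c + a y with c \<in> F[x]: the basis for induction over A_h.\<close>
lemma pCons_as_sum: "pCons c a = ah_const c + ah_mult h a ah_y"
  by (simp add: mult_y_right ah_const_def)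

lemma ymul_const: "ymul h (ah_const p) = monom p 1 + ah_const (ah_delta h p)"
  by (simp add: const_monom ymul_monom)

lemma defining_relation: "ah_const h = ah_mult h ah_y ah_x - ah_mult h ah_x ah_y"
proof -
  have "ah_mult h ah_y ah_x = monom [:0, 1:] 1 + ah_const h"
    by (simp add: mult_y_left x_const ymul_const ah_delta_def pderiv_pCons)
  moreover have "ah_mult h ah_x ah_y = monom [:0, 1:] 1"
    by (simp add: mult_y_right ah_x_def monom_Suc monom_0)
  ultimately show ?thesis by simp
qed

section \<open>Products modulo h and the y-degree\<close>

text \<open>Modulo h the derivation vanishes, so applying y^i agrees with the commutative product
  by y^i up to a multiple of h.\<close>
lemma ymul_pow_mod_h: "\<exists>u. (ymul h ^^ i) b = monom 1 i * b + smult h u"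
proof (induction i)
  case 0 then show ?case by (auto intro: exI[of _ 0])
next
  case (Suc i)
  then obtain u where u: "(ymul h ^^ i) b = monom 1 i * b + smult h u" by blast
  have ymul_eq: "ymul h c = monom 1 1 * c + smult h (map_poly pderiv c)" for c
    by (rule poly_eqI)
       (simp add: coeff_ymul monom_Suc monom_0 coeff_pCons coeff_map_poly ah_delta_def
         split: nat.split)
  have "(ymul h ^^ Suc i) b = monom 1 1 * (monom 1 i * b + smult h u)
        + smult h (map_poly pderiv (monom 1 i * b + smult h u))"
    using u by (simp add: ymul_eq)
  also have "\<dots> = monom 1 (Suc i) * b
      + smult h (monom 1 1 * u + map_poly pderiv (monom 1 i * b + smult h u))"
    by (simp add: algebra_simps mult_monom smult_add_right)
  finally show ?case by blast
qed

lemma mult_mod_h: "\<exists>u. ah_mult h a b = a * b + smult h u"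
proof -
  obtain U where U: "\<And>i. (ymul h ^^ i) b = monom 1 i * b + smult h (U i)"
    using ymul_pow_mod_h[where h=h and b=b] by metis
  have "ah_mult h a b
      = (\<Sum>i\<le>degree a. monom (coeff a i) i * b + smult h (smult (coeff a i) (U i)))"
    by (simp add: ah_mult_ymul U smult_add_right smult_monom_mult mult.commute[of "coeff a _" h])
  also have "\<dots> = a * b + smult h (\<Sum>i\<le>degree a. smult (coeff a i) (U i))"
    by (simp add: sum.distrib sum_distrib_right[symmetric] poly_as_sum_of_monoms smult_sum_right)
  finally show ?thesis by blast
qed

lemma commutator_in_hA: "\<exists>u. ah_mult h a b - ah_mult h b a = smult h u"
proof -
  obtain u v where "ah_mult h a b = a * b + smult h u" "ah_mult h b a = b * a + smult h v"
    using mult_mod_h by metis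
  hence "ah_mult h a b - ah_mult h b a = smult h (u - v)"
    by (simp add: mult.commute smult_diff_right)
  thus ?thesis by blast
qed

lemma ymul_pow_degree:
  "degree ((ymul h ^^ i) b) \<le> i + degree b \<and> coeff ((ymul h ^^ i) b) (i + degree b) = lead_coeff b"
proof (induction i)
  case 0 then show ?case by simp
next
  case (Suc i)
  have step: "degree (ymul h c) \<le> Suc n \<and> coeff (ymul h c) (Suc n) = coeff c n"
    if "degree c \<le> n" for c :: "'a poly poly" and n
    using that by (auto intro!: degree_le simp: coeff_ymul coeff_eq_0 split: nat.split)
  have "degree (ymul h ((ymul h ^^ i) b)) \<le> Suc (i + degree b)
      \<and> coeff (ymul h ((ymul h ^^ i) b)) (Suc (i + degree b)) = coeff ((ymul h ^^ i) b) (i + degree b)"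
    by (rule step) (use Suc.IH in blast)
  then show ?case using Suc.IH by simp
qed

lemma mult_degree:
  assumes "a \<noteq> 0" "b \<noteq> 0"
  shows "degree (ah_mult h a b) = degree a + degree b
       \<and> coeff (ah_mult h a b) (degree a + degree b) = lead_coeff a * lead_coeff b"
proof -
  have coeff_mult: "coeff (ah_mult h a b) n = (\<Sum>i\<le>degree a. coeff a i * coeff ((ymul h ^^ i) b) n)"
    for n by (simp add: ah_mult_ymul coeff_sum)
  have z: "coeff ((ymul h ^^ i) b) n = 0" if "i + degree b < n" for i n
    using ymul_pow_degree[where h=h and i=i and b=b] that by (intro coeff_eq_0) simp
  have le: "degree (ah_mult h a b) \<le> degree a + degree b"
    by (rule degree_le) (simp add: coeff_mult z)
  have "coeff (ah_mult h a b) (degree a + degree b)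
      = (\<Sum>i<Suc (degree a). coeff a i * coeff ((ymul h ^^ i) b) (degree a + degree b))"
    by (simp add: coeff_mult lessThan_Suc_atMost)
  also have "\<dots> = (\<Sum>i<degree a. coeff a i * coeff ((ymul h ^^ i) b) (degree a + degree b))
                 + lead_coeff a * lead_coeff b"
    using ymul_pow_degree[where h=h and i="degree a" and b=b] by simp
  also have "(\<Sum>i<degree a. coeff a i * coeff ((ymul h ^^ i) b) (degree a + degree b)) = 0"
    by (rule sum.neutral) (auto simp: z)
  finally have c: "coeff (ah_mult h a b) (degree a + degree b) = lead_coeff a * lead_coeff b"
    by simp
  with assms have "coeff (ah_mult h a b) (degree a + degree b) \<noteq> 0" by simp
  hence "degree a + degree b \<le> degree (ah_mult h a b)" by (rule le_degree)
  with le c show ?thesis by simp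
qed

definition is_hom :: "'a::field poly \<Rightarrow> ('a poly poly \<Rightarrow> 'a poly poly) \<Rightarrow> bool" where
  "is_hom h w \<longleftrightarrow> w 1 = 1 \<and> (\<forall>a b. w (a + b) = w a + w b)
     \<and> (\<forall>c a. w (ah_scal c a) = ah_scal c (w a))
     \<and> (\<forall>a b. w (ah_mult h a b) = ah_mult h (w a) (w b))"

lemma is_aut_iff: "is_aut h w \<longleftrightarrow> bij w \<and> is_hom h w"
  by (auto simp: is_aut_def is_hom_def)

context
  fixes h :: "'a::field poly" and w
  assumes hom: "is_hom h w"
begin

lemma hom_1: "w 1 = 1" using hom by (simp add: is_hom_def)
lemma hom_add: "w (a + b) = w a + w b" using hom by (simp add: is_hom_def)
lemma hom_scal: "w (ah_scal c a) = ah_scal c (w a)" using hom by (simp add: is_hom_def)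
lemma hom_mult: "w (ah_mult h a b) = ah_mult h (w a) (w b)" using hom by (simp add: is_hom_def)

lemma hom_0: "w 0 = 0"
  using hom_add[of 0 0] by (metis add_cancel_right_right)

lemma hom_diff: "w (a - b) = w a - w b"
proof -
  have "w (- b) = - w b"
    using hom_add[of b "-b"] by (simp add: hom_0 eq_neg_iff_add_eq_0 add.commute)
  thus ?thesis using hom_add[of a "-b"] by simp
qed

lemma hom_const_pCons:
  "w (ah_const (pCons c p)) = ah_scal c 1 + ah_mult h (w ah_x) (w (ah_const p))"
proof -
  have "ah_const (pCons c p) = ah_scal c 1 + ah_mult h ah_x (ah_const p)"
    by (simp add: ah_x_def ah_scal_def ah_const_def mult_const_left[unfolded ah_const_def] one_pCons)
  thus ?thesis by (simp add: hom_add hom_scal hom_mult hom_1)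
qed

lemma hom_const_pcompose: "w ah_x = ah_const q \<Longrightarrow> w (ah_const p) = ah_const (pcompose p q)"
proof (induction p rule: pCons_induct)
  case 0 then show ?case by (simp add: ah_const_def hom_0)
next
  case (pCons c p)
  then show ?case
    by (simp add: hom_const_pCons pcompose_pCons mult_const_const)
       (simp add: ah_scal_def ah_const_def one_pCons)
qed

lemma hom_fix_x_const: "w ah_x = ah_x \<Longrightarrow> w (ah_const p) = ah_const p"
  using hom_const_pcompose[of "[:0, 1:]" p] by (simp add: x_const)

end

lemma hom_eqI:
  assumes h1: "is_hom h w1" and h2: "is_hom h w2"
    and x: "w1 ah_x = w2 ah_x" and y: "w1 ah_y = w2 ah_y"
  shows "w1 = w2"
proof -
  have c: "w1 (ah_const p) = w2 (ah_const p)" for p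
  proof (induction p rule: pCons_induct)
    case 0 then show ?case using hom_0[OF h1] hom_0[OF h2] by (simp add: ah_const_def)
  next
    case (pCons c p)
    then show ?case by (simp add: hom_const_pCons[OF h1] hom_const_pCons[OF h2] x)
  qed
  have "w1 a = w2 a" for a
  proof (induction a rule: pCons_induct)
    case 0 then show ?case using hom_0[OF h1] hom_0[OF h2] by simp
  next
    case (pCons c a)
    then show ?case
      by (simp add: pCons_as_sum[where h=h] hom_add[OF h1] hom_add[OF h2]
          hom_mult[OF h1] hom_mult[OF h2] c y)
  qed
  thus ?thesis by blast
qed

lemma hom_id: "is_hom h id"
  by (simp add: is_hom_def)

lemma hom_comp: "is_hom h w1 \<Longrightarrow> is_hom h w2 \<Longrightarrow> is_hom h (w1 \<circ> w2)"
  by (simp add: is_hom_def)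

lemma hom_inv: assumes "bij w" "is_hom h w" shows "is_hom h (inv_into UNIV w)"
proof -
  have ww: "w (inv_into UNIV w a) = a" for a
    using assms(1) by (simp add: bij_is_surj surj_f_inv_f)
  have iw: "inv_into UNIV w (w a) = a" for a
    using assms(1) by (simp add: bij_is_inj inv_f_f)
  show ?thesis unfolding is_hom_def
  proof (intro conjI allI)
    show "inv_into UNIV w 1 = 1" using hom_1[OF assms(2)] iw by metis
    show "inv_into UNIV w (a + b) = inv_into UNIV w a + inv_into UNIV w b" for a b
      by (metis hom_add[OF assms(2)] ww iw)
    show "inv_into UNIV w (ah_scal c a) = ah_scal c (inv_into UNIV w a)" for c a
      by (metis hom_scal[OF assms(2)] ww iw)
    show "inv_into UNIV w (ah_mult h a b) = ah_mult h (inv_into UNIV w a) (inv_into UNIV w b)" for a b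
      by (metis hom_mult[OF assms(2)] ww iw)
  qed
qed

lemma aut_inv: "is_aut h w \<Longrightarrow> is_aut h (inv_into UNIV w)"
  by (simp add: is_aut_iff hom_inv bij_imp_bij_inv)

lemma aut_comp: "is_aut h w1 \<Longrightarrow> is_aut h w2 \<Longrightarrow> is_aut h (w1 \<circ> w2)"
  by (simp add: is_aut_iff hom_comp bij_comp)

lemma aut_id: "is_aut h id"
  by (simp add: is_aut_iff hom_id)

lemma aut_nonzero: assumes "is_aut h w" "a \<noteq> 0" shows "w a \<noteq> 0"
proof
  assume "w a = 0"
  moreover have "w 0 = 0" using assms(1) hom_0[of h w] by (simp add: is_aut_iff)
  moreover have "inj w" using assms(1) by (simp add: is_aut_iff bij_is_inj)
  ultimately have "a = 0" by (metis injD)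
  with assms(2) show False by simp
qed

section \<open>Universal property: constructing homomorphisms\<close>

locale ore_lift =
  fixes h :: "'a::field poly" and E :: "'a poly \<Rightarrow> 'a poly poly" and Y :: "'a poly poly"
  assumes E_add: "E (p + q) = E p + E q"
    and E_mult: "E (p * q) = ah_mult h (E p) (E q)"
    and E_one: "E 1 = 1"
    and E_smult: "E (smult c p) = ah_scal c (E p)"
    and Y_commute: "ah_mult h Y (E p) = ah_mult h (E p) Y + E (ah_delta h p)"
begin

definition Ypow :: "nat \<Rightarrow> 'a poly poly" where
  "Ypow i = ((\<lambda>b. ah_mult h Y b) ^^ i) 1"

definition lift :: "'a poly poly \<Rightarrow> 'a poly poly" where
  "lift a = (\<Sum>i\<le>degree a. ah_mult h (E (coeff a i)) (Ypow i))"

lemma Ypow_Suc: "Ypow (Suc i) = ah_mult h Y (Ypow i)"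
  by (simp add: Ypow_def)

lemma Ypow_0: "Ypow 0 = 1"
  by (simp add: Ypow_def)

lemma E_0: "E 0 = 0"
  using E_add[of 0 0] by (metis add_cancel_right_right)

lemma lift_le: "degree a \<le> N \<Longrightarrow> lift a = (\<Sum>i\<le>N. ah_mult h (E (coeff a i)) (Ypow i))"
  unfolding lift_def by (rule sum.mono_neutral_left) (auto simp: coeff_eq_0 E_0)

lemma lift_add: "lift (a + b) = lift a + lift b"
proof -
  let ?N = "max (degree a) (degree b)"
  have "degree (a + b) \<le> ?N" by (rule degree_add_le_max)
  thus ?thesis by (simp add: lift_le[of _ ?N] E_add mult_add_left sum.distrib)
qed

lemma lift_0: "lift 0 = 0"
  by (simp add: lift_def E_0)

lemma lift_sum: "lift (sum f A) = (\<Sum>i\<in>A. lift (f i))"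
  by (induction A rule: infinite_finite_induct) (auto simp: lift_0 lift_add)

lemma lift_monom: "lift (monom p n) = ah_mult h (E p) (Ypow n)"
proof -
  have "lift (monom p n) = (\<Sum>k\<le>n. ah_mult h (E (coeff (monom p n) k)) (Ypow k))"
    by (rule lift_le) (simp add: degree_monom_le)
  also have "\<dots> = (\<Sum>k\<in>{n}. ah_mult h (E (coeff (monom p n) k)) (Ypow k))"
    by (rule sum.mono_neutral_right) (auto simp: E_0)
  finally show ?thesis by simp
qed

lemma lift_smult: "lift (smult p a) = ah_mult h (E p) (lift a)"
proof -
  have "degree (smult p a) \<le> degree a" by (rule degree_smult_le)
  hence "lift (smult p a) = (\<Sum>i\<le>degree a. ah_mult h (E (p * coeff a i)) (Ypow i))"
    by (simp add: lift_le[of _ "degree a"])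
  also have "\<dots> = ah_mult h (E p) (lift a)"
    by (simp add: lift_def E_mult mult_assoc mult_sum_right)
  finally show ?thesis .
qed

lemma lift_scal: "lift (ah_scal c a) = ah_scal c (lift a)"
proof -
  have "E [:c:] = ah_scal c 1" using E_smult[of c 1] E_one by simp
  thus ?thesis by (simp add: ah_scal_def[of c a] lift_smult mult_scal_left)
qed

lemma lift_ymul: "lift (ymul h c) = ah_mult h Y (lift c)"
proof -
  have "lift (ymul h c) = lift (ymul h (\<Sum>j\<le>degree c. monom (coeff c j) j))"
    by (simp add: poly_as_sum_of_monoms)
  also have "\<dots> = (\<Sum>j\<le>degree c. ah_mult h (E (coeff c j)) (Ypow (Suc j))
                   + ah_mult h (E (ah_delta h (coeff c j))) (Ypow j))"
    by (simp add: ymul_sum ymul_monom lift_sum lift_add lift_monom)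
  also have "\<dots> = (\<Sum>j\<le>degree c. ah_mult h (ah_mult h Y (E (coeff c j))) (Ypow j))"
    by (simp add: Y_commute mult_add_left mult_assoc Ypow_Suc)
  also have "\<dots> = ah_mult h Y (lift c)"
    by (simp add: lift_def mult_sum_right mult_assoc)
  finally show ?thesis .
qed

lemma lift_mult: "lift (ah_mult h a b) = ah_mult h (lift a) (lift b)"
proof -
  have lift_ymul_pow: "lift ((ymul h ^^ i) c) = ah_mult h (Ypow i) (lift c)" for i c
    by (induction i) (auto simp: lift_ymul Ypow_0 Ypow_Suc mult_assoc)
  have "lift (ah_mult h a b)
      = (\<Sum>i\<le>degree a. ah_mult h (E (coeff a i)) (ah_mult h (Ypow i) (lift b)))"
    by (simp add: ah_mult_ymul lift_sum lift_smult lift_ymul_pow)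
  also have "\<dots> = ah_mult h (lift a) (lift b)"
    by (simp add: lift_def mult_sum_left mult_assoc)
  finally show ?thesis .
qed

lemma lift_1: "lift 1 = 1"
  by (simp add: lift_def E_one Ypow_0)

lemma lift_hom: "is_hom h lift"
  by (simp add: is_hom_def lift_add lift_scal lift_mult lift_1)

lemma lift_x: "lift ah_x = E [:0, 1:]"
  by (simp add: ah_x_def lift_monom[of _ 0, unfolded monom_0] Ypow_0)

lemma lift_y: "lift ah_y = Y"
  by (simp add: ah_y_def lift_monom E_one Ypow_Suc Ypow_0)

end

text \<open>phi_f: x \<mapsto> x, y \<mapsto> y + f; it extends since [y + f, p] = \<delta>(p) for p \<in> F[x].\<close>
lemma ore_lift_phi:
  fixes h f :: "'a::field poly"
  shows "ore_lift h ah_const (ah_y + ah_const f)"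
proof
  show "ah_const (p + q) = ah_const p + ah_const q" for p q :: "'a poly"
    by (rule ah_const_add)
  show "ah_const (p * q) = ah_mult h (ah_const p) (ah_const q)" for p q
    by (simp add: mult_const_const)
  show "ah_const 1 = 1" by (simp add: ah_const_def one_pCons)
  show "ah_const (smult c p) = ah_scal c (ah_const p)" for c and p :: "'a poly"
    by (simp add: ah_const_def ah_scal_def)
  show "ah_mult h (ah_y + ah_const f) (ah_const p)
      = ah_mult h (ah_const p) (ah_y + ah_const f) + ah_const (ah_delta h p)" for p
    by (simp add: mult_add_left mult_add_right mult_y_left ymul_const mult_const_const)
       (simp add: mult_const_left ah_y_def smult_monom mult.commute)
qed

definition phi_hom :: "'a::field poly \<Rightarrow> 'a poly \<Rightarrow> 'a poly poly \<Rightarrow> 'a poly poly" where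
  "phi_hom h f = ore_lift.lift h ah_const (ah_y + ah_const f)"

lemma phi_hom_hom: "is_hom h (phi_hom h f)"
  unfolding phi_hom_def by (rule ore_lift.lift_hom[OF ore_lift_phi])

lemma phi_hom_x: "phi_hom h f ah_x = ah_x"
  unfolding phi_hom_def by (simp add: ore_lift.lift_x[OF ore_lift_phi]) (simp add: x_const)

lemma phi_hom_y: "phi_hom h f ah_y = ah_y + ah_const f"
  unfolding phi_hom_def by (simp add: ore_lift.lift_y[OF ore_lift_phi])

lemma phi_hom_const: "phi_hom h f (ah_const p) = ah_const p"
  by (rule hom_fix_x_const[OF phi_hom_hom phi_hom_x])

lemma phi_hom_add: "phi_hom h f \<circ> phi_hom h g = phi_hom h (f + g)"
  by (rule hom_eqI[OF hom_comp[OF phi_hom_hom phi_hom_hom] phi_hom_hom])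
     (simp_all add: phi_hom_x phi_hom_y hom_add[OF phi_hom_hom] phi_hom_const ah_const_add)

lemma phi_hom_0: "phi_hom h 0 = id"
  by (rule hom_eqI[OF phi_hom_hom hom_id]) (simp_all add: phi_hom_x phi_hom_y ah_const_def)

lemma phi_hom_aut: "is_aut h (phi_hom h f)"
proof -
  have "phi_hom h f \<circ> phi_hom h (-f) = id" "phi_hom h (-f) \<circ> phi_hom h f = id"
    by (simp_all add: phi_hom_add phi_hom_0)
  hence "bij (phi_hom h f)" by (metis o_bij)
  thus ?thesis by (simp add: is_aut_iff phi_hom_hom)
qed

lemma phi_eq: "phi h = phi_hom h"
proof
  fix f
  show "phi h f = phi_hom h f"
    unfolding phi_def
  proof (rule the_equality)
    show "is_aut h (phi_hom h f) \<and> phi_hom h f ah_x = ah_x \<and> phi_hom h f ah_y = ah_y + ah_const f"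
      by (simp add: phi_hom_aut phi_hom_x phi_hom_y)
    fix w assume "is_aut h w \<and> w ah_x = ah_x \<and> w ah_y = ah_y + ah_const f"
    then show "w = phi_hom h f"
      by (intro hom_eqI[OF _ phi_hom_hom]) (simp_all add: is_aut_iff phi_hom_x phi_hom_y)
  qed
qed

lemma phi_add: "phi h (f + g) = phi h f \<circ> phi h g"
  by (simp add: phi_eq phi_hom_add)

lemma phi_inj: "inj (phi h)"
proof (rule injI)
  fix f g assume "phi h f = phi h g"
  hence "phi_hom h f ah_y = phi_hom h g ah_y" by (simp add: phi_eq)
  thus "f = g" by (simp add: phi_hom_y ah_const_def)
qed

lemma Pset_one: "(1, 0) \<in> Pset h"
  by (simp add: Pset_def)

text \<open>(\<alpha>x + \<beta>) \<circ> (\<alpha>'x + \<beta>') composed as substitutions.\<close>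
lemma Pset_mult:
  assumes a: "(\<alpha>, \<beta>) \<in> Pset h" and b: "(\<alpha>', \<beta>') \<in> Pset h"
  shows "(\<alpha> * \<alpha>', \<beta>' + \<alpha>' * \<beta>) \<in> Pset h"
proof -
  have "[:\<beta>' + \<alpha>' * \<beta>, \<alpha> * \<alpha>':] = pcompose [:\<beta>', \<alpha>':] [:\<beta>, \<alpha>:]"
    by (simp add: pcompose_pCons algebra_simps)
  hence "pcompose h [:\<beta>' + \<alpha>' * \<beta>, \<alpha> * \<alpha>':] = smult ((\<alpha> * \<alpha>') ^ degree h) h"
    using a b by (simp add: Pset_def pcompose_assoc pcompose_smult power_mult_distrib mult.commute)
  thus ?thesis using a b by (simp add: Pset_def)
qed

lemma Pset_inv:
  assumes a: "(\<alpha>, \<beta>) \<in> Pset h"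
  shows "(1 / \<alpha>, - (\<beta> / \<alpha>)) \<in> Pset h"
proof -
  let ?q = "[:- (\<beta> / \<alpha>), 1 / \<alpha>:]"
  have a0: "\<alpha> \<noteq> 0" and hc: "pcompose h [:\<beta>, \<alpha>:] = smult (\<alpha> ^ degree h) h"
    using a by (auto simp: Pset_def)
  have "pcompose [:\<beta>, \<alpha>:] ?q = [:0, 1:]"
    using a0 by (simp add: pcompose_pCons)
  hence "h = pcompose (pcompose h [:\<beta>, \<alpha>:]) ?q"
    by (metis pcompose_assoc pcompose_idR)
  also have "\<dots> = smult (\<alpha> ^ degree h) (pcompose h ?q)"
    by (simp only: hc pcompose_smult)
  finally have "smult ((1 / \<alpha>) ^ degree h) h
      = smult ((1 / \<alpha>) ^ degree h * \<alpha> ^ degree h) (pcompose h ?q)"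
    by (metis smult_smult)
  also have "(1 / \<alpha>) ^ degree h * \<alpha> ^ degree h = 1"
    using a0 by (simp add: power_one_over)
  finally show ?thesis using a0 by (simp add: Pset_def)
qed

lemma Pset_power:
  assumes "(\<alpha>, \<beta>) \<in> Pset h"
  shows "(\<alpha> ^ n, \<beta> * (\<Sum>i<n. \<alpha> ^ i)) \<in> Pset h"
proof (induction n)
  case 0 then show ?case by (simp add: Pset_one)
next
  case (Suc n)
  have "\<beta> * (\<Sum>i<n. \<alpha> ^ i) + \<alpha> ^ n * \<beta> = \<beta> * (\<Sum>i<Suc n. \<alpha> ^ i)"
    by (simp add: algebra_simps)
  with Pset_mult[OF assms Suc] show ?case by simp
qed

text \<open>tau: x \<mapsto> \<alpha>x + \<beta>, y \<mapsto> \<alpha>^(deg h - 1) y; it extends by delta_pcompose.\<close>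
lemma ore_lift_tau:
  assumes P: "(\<alpha>, \<beta>) \<in> Pset h" and d: "degree h \<ge> 1"
  shows "ore_lift h (\<lambda>p. ah_const (pcompose p [:\<beta>, \<alpha>:])) (ah_scal (\<alpha> ^ (degree h - 1)) ah_y)"
proof
  have hc: "pcompose h [:\<beta>, \<alpha>:] = smult (\<alpha> ^ degree h) h" using P by (simp add: Pset_def)
  show "ah_const (pcompose (p + q) [:\<beta>, \<alpha>:])
      = ah_const (pcompose p [:\<beta>, \<alpha>:]) + ah_const (pcompose q [:\<beta>, \<alpha>:])" for p q
    by (simp add: ah_const_def pcompose_add)
  show "ah_const (pcompose (p * q) [:\<beta>, \<alpha>:])
      = ah_mult h (ah_const (pcompose p [:\<beta>, \<alpha>:])) (ah_const (pcompose q [:\<beta>, \<alpha>:]))" for p q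
    by (simp add: mult_const_const pcompose_mult)
  show "ah_const (pcompose 1 [:\<beta>, \<alpha>:]) = 1"
    by (simp add: ah_const_def one_pCons pcompose_1)
  show "ah_const (pcompose (smult c p) [:\<beta>, \<alpha>:]) = ah_scal c (ah_const (pcompose p [:\<beta>, \<alpha>:]))"
    for c p by (simp add: ah_const_def ah_scal_def pcompose_smult)
  fix p
  let ?q = "pcompose p [:\<beta>, \<alpha>:]" and ?l = "\<alpha> ^ (degree h - 1)"
  have dc: "ah_scal ?l (ah_const (ah_delta h ?q)) = ah_const (pcompose (ah_delta h p) [:\<beta>, \<alpha>:])"
    using delta_pcompose[OF hc d, of p] by (simp add: ah_scal_def ah_const_def)
  have "ah_mult h (ah_scal ?l ah_y) (ah_const ?q)
      = ah_scal ?l (monom ?q 1) + ah_scal ?l (ah_const (ah_delta h ?q))"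
    by (simp only: mult_scal_left mult_y_left ymul_const) (simp add: ah_scal_def smult_add_right)
  also have "ah_scal ?l (monom ?q 1) = ah_mult h (ah_const ?q) (ah_scal ?l ah_y)"
    by (simp add: mult_const_left ah_scal_def ah_y_def smult_monom mult.commute)
  finally show "ah_mult h (ah_scal ?l ah_y) (ah_const ?q)
      = ah_mult h (ah_const ?q) (ah_scal ?l ah_y) + ah_const (pcompose (ah_delta h p) [:\<beta>, \<alpha>:])"
    using dc by simp
qed

definition tau_hom :: "'a::field poly \<Rightarrow> 'a \<Rightarrow> 'a \<Rightarrow> 'a poly poly \<Rightarrow> 'a poly poly" where
  "tau_hom h \<alpha> \<beta> =
     ore_lift.lift h (\<lambda>p. ah_const (pcompose p [:\<beta>, \<alpha>:])) (ah_scal (\<alpha> ^ (degree h - 1)) ah_y)"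

context
  fixes h :: "'a::field poly" and \<alpha> \<beta>
  assumes P: "(\<alpha>, \<beta>) \<in> Pset h" and d: "degree h \<ge> 1"
begin

lemma tau_hom_hom: "is_hom h (tau_hom h \<alpha> \<beta>)"
  unfolding tau_hom_def by (rule ore_lift.lift_hom[OF ore_lift_tau[OF P d]])

lemma tau_hom_x: "tau_hom h \<alpha> \<beta> ah_x = ah_const [:\<beta>, \<alpha>:]"
  unfolding tau_hom_def ore_lift.lift_x[OF ore_lift_tau[OF P d]] by (simp add: pcompose_pCons)

lemma tau_hom_y: "tau_hom h \<alpha> \<beta> ah_y = ah_scal (\<alpha> ^ (degree h - 1)) ah_y"
  unfolding tau_hom_def by (rule ore_lift.lift_y[OF ore_lift_tau[OF P d]])

lemma tau_hom_const: "tau_hom h \<alpha> \<beta> (ah_const p) = ah_const (pcompose p [:\<beta>, \<alpha>:])"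
  by (rule hom_const_pcompose[OF tau_hom_hom tau_hom_x])

end

lemma tau_hom_one: assumes d: "degree h \<ge> 1" shows "tau_hom h 1 0 = id"
  by (rule hom_eqI[OF tau_hom_hom[OF Pset_one d] hom_id])
     (simp_all only: tau_hom_x[OF Pset_one d] tau_hom_y[OF Pset_one d],
      simp_all add: x_const ah_scal_def one_pCons[symmetric])

lemma ah_scal_ah_scal: "ah_scal c (ah_scal d a) = ah_scal (c * d) a"
  by (simp add: ah_scal_def mult.commute)

lemma tau_hom_comp:
  assumes a: "(\<alpha>, \<beta>) \<in> Pset h" and b: "(\<alpha>', \<beta>') \<in> Pset h" and d: "degree h \<ge> 1"
  shows "tau_hom h \<alpha> \<beta> \<circ> tau_hom h \<alpha>' \<beta>' = tau_hom h (\<alpha> * \<alpha>') (\<beta>' + \<alpha>' * \<beta>)"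
proof (rule hom_eqI[OF hom_comp[OF tau_hom_hom[OF a d] tau_hom_hom[OF b d]]
      tau_hom_hom[OF Pset_mult[OF a b] d]])
  show "(tau_hom h \<alpha> \<beta> \<circ> tau_hom h \<alpha>' \<beta>') ah_x = tau_hom h (\<alpha> * \<alpha>') (\<beta>' + \<alpha>' * \<beta>) ah_x"
    by (simp add: tau_hom_x[OF b d] tau_hom_x[OF Pset_mult[OF a b] d] tau_hom_const[OF a d]
        pcompose_pCons algebra_simps)
  show "(tau_hom h \<alpha> \<beta> \<circ> tau_hom h \<alpha>' \<beta>') ah_y = tau_hom h (\<alpha> * \<alpha>') (\<beta>' + \<alpha>' * \<beta>) ah_y"
    by (simp add: tau_hom_y[OF b d] tau_hom_y[OF Pset_mult[OF a b] d] tau_hom_y[OF a d]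
        hom_scal[OF tau_hom_hom[OF a d]] ah_scal_ah_scal power_mult_distrib mult.commute)
qed

lemma tau_hom_inverse:
  assumes a: "(\<alpha>, \<beta>) \<in> Pset h" and d: "degree h \<ge> 1"
  shows "tau_hom h \<alpha> \<beta> \<circ> tau_hom h (1/\<alpha>) (- (\<beta> / \<alpha>)) = id"
    and "tau_hom h (1/\<alpha>) (- (\<beta> / \<alpha>)) \<circ> tau_hom h \<alpha> \<beta> = id"
proof -
  have a0: "\<alpha> \<noteq> 0" using a by (simp add: Pset_def)
  show "tau_hom h \<alpha> \<beta> \<circ> tau_hom h (1/\<alpha>) (- (\<beta> / \<alpha>)) = id"
    using a0 by (simp add: tau_hom_comp[OF a Pset_inv[OF a] d] tau_hom_one[OF d])
  show "tau_hom h (1/\<alpha>) (- (\<beta> / \<alpha>)) \<circ> tau_hom h \<alpha> \<beta> = id"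
    using a0 by (simp add: tau_hom_comp[OF Pset_inv[OF a] a d] tau_hom_one[OF d])
qed

lemma tau_hom_aut:
  assumes a: "(\<alpha>, \<beta>) \<in> Pset h" and d: "degree h \<ge> 1"
  shows "is_aut h (tau_hom h \<alpha> \<beta>)"
proof -
  have "bij (tau_hom h \<alpha> \<beta>)" using tau_hom_inverse[OF a d] by (metis o_bij)
  thus ?thesis by (simp add: is_aut_iff tau_hom_hom[OF a d])
qed

lemma tau_eq:
  assumes a: "(\<alpha>, \<beta>) \<in> Pset h" and d: "degree h \<ge> 1"
  shows "tau h \<alpha> \<beta> = tau_hom h \<alpha> \<beta>"
  unfolding tau_def
proof (rule the_equality)
  show "is_aut h (tau_hom h \<alpha> \<beta>) \<and> tau_hom h \<alpha> \<beta> ah_x = ah_const [:\<beta>, \<alpha>:]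
      \<and> tau_hom h \<alpha> \<beta> ah_y = ah_scal (\<alpha> ^ (degree h - 1)) ah_y"
    by (simp add: tau_hom_aut[OF a d] tau_hom_x[OF a d] tau_hom_y[OF a d])
  fix w assume "is_aut h w \<and> w ah_x = ah_const [:\<beta>, \<alpha>:] \<and> w ah_y = ah_scal (\<alpha> ^ (degree h - 1)) ah_y"
  then show "w = tau_hom h \<alpha> \<beta>"
    by (intro hom_eqI[OF _ tau_hom_hom[OF a d]]) (simp_all add: is_aut_iff tau_hom_x[OF a d] tau_hom_y[OF a d])
qed

lemma tau_power:
  assumes P: "(\<alpha>, \<beta>) \<in> Pset h" and d: "degree h \<ge> 1"
  shows "tau_hom h \<alpha> \<beta> ^^ n = tau_hom h (\<alpha> ^ n) (\<beta> * (\<Sum>i<n. \<alpha> ^ i))"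
proof (induction n)
  case 0 then show ?case by (simp add: tau_hom_one[OF d])
next
  case (Suc n)
  have "\<beta> * (\<Sum>i<n. \<alpha> ^ i) + \<alpha> ^ n * \<beta> = \<beta> * (\<Sum>i<Suc n. \<alpha> ^ i)"
    by (simp add: algebra_simps)
  with Suc show ?case by (simp add: tau_hom_comp[OF P Pset_power[OF P] d])
qed

section \<open>Classification of automorphisms\<close>

text \<open>An automorphism maps h to a nonzero scalar multiple of h: both w(h) and w^(-1)(h) are
  commutators, hence lie in hA_h, and the resulting factorisation of 1 forces a unit.\<close>
lemma aut_image_h:
  assumes w: "is_aut h w" and h0: "h \<noteq> 0"
  shows "\<exists>c. c \<noteq> 0 \<and> w (ah_const h) = ah_const (smult c h)"
proof -
  let ?v = "inv_into UNIV w"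
  have hw: "is_hom h w" and hv: "is_hom h ?v" using w aut_inv[OF w] by (simp_all add: is_aut_iff)
  have in_hA: "\<exists>u. z (ah_const h) = smult h u" if "is_hom h z" for z
  proof -
    have "z (ah_const h) = ah_mult h (z ah_y) (z ah_x) - ah_mult h (z ah_x) (z ah_y)"
      by (subst defining_relation) (simp add: hom_diff[OF that] hom_mult[OF that])
    thus ?thesis using commutator_in_hA by metis
  qed
  obtain U where U: "w (ah_const h) = smult h U" using in_hA[OF hw] by blast
  obtain V where V: "?v (ah_const h) = smult h V" using in_hA[OF hv] by blast
  have "ah_const h = w (?v (ah_const h))"
    using w by (simp add: is_aut_iff bij_is_surj surj_f_inv_f)
  also have "\<dots> = w (ah_mult h (ah_const h) V)" by (simp add: V mult_const_left)
  also have "\<dots> = smult h (ah_mult h U (w V))" by (simp add: hom_mult[OF hw] U mult_smult_left)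
  finally have "smult h (ah_mult h U (w V) - 1) = 0"
    by (simp add: smult_diff_right ah_const_def)
  hence UW: "ah_mult h U (w V) = 1" using h0 by simp
  hence U0: "U \<noteq> 0" and W0: "w V \<noteq> 0" by auto
  from mult_degree[OF U0 W0, of h] UW
  have dU: "degree U = 0" and lc: "lead_coeff U * lead_coeff (w V) = 1" by auto
  have "degree (lead_coeff U) = 0"
    using lc U0 is_unit_iff_degree[of "lead_coeff U"] by (simp add: dvdI[of 1 _ "lead_coeff (w V)"])
  then obtain c where c: "lead_coeff U = [:c:]" by (metis degree_0_id)
  have "c \<noteq> 0" using lc c by auto
  moreover have "U = [:[:c:]:]" using degree_0_id[OF dU] c dU by simp
  ultimately show ?thesis using U by (auto simp: ah_const_def mult.commute[of h])
qed

lemma aut_degree_const: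
  assumes w: "is_aut h w" and m: "degree (w ah_x) > 0"
  shows "degree (w (ah_const p)) = degree (w ah_x) * degree p"
proof (induction p rule: pCons_induct)
  case 0 then show ?case using w hom_0[of h w] by (simp add: ah_const_def is_aut_iff)
next
  case (pCons c p)
  have hw: "is_hom h w" using w by (simp add: is_aut_iff)
  show ?case
  proof (cases "p = 0")
    case True
    then show ?thesis
      using hom_const_pCons[OF hw, of c p] by (simp add: ah_const_def hom_0[OF hw] ah_scal_def)
  next
    case False
    have nz1: "w ah_x \<noteq> 0" using m by auto
    have nz2: "w (ah_const p) \<noteq> 0" using aut_nonzero[OF w] False by (simp add: ah_const_def)
    have "degree (ah_mult h (w ah_x) (w (ah_const p))) = degree (w ah_x) + degree (w ah_x) * degree p"
      using mult_degree[OF nz1 nz2, of h] pCons.IH by simp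
    moreover have "degree (ah_scal c 1) = 0" by (simp add: ah_scal_def)
    ultimately have "degree (ah_scal c 1 + ah_mult h (w ah_x) (w (ah_const p)))
        = degree (w ah_x) + degree (w ah_x) * degree p"
      using m by (subst degree_add_eq_right) auto
    then show ?thesis using hom_const_pCons[OF hw, of c p] False by (simp add: degree_pCons_eq)
  qed
qed

lemma degree_one_form: "degree (q::'b::zero poly) = 1 \<Longrightarrow> q = [:coeff q 0, coeff q 1:]"
  by (rule poly_eqI) (auto simp: coeff_pCons coeff_eq_0 split: nat.split)

lemma pcompose_rescale_Pset:
  fixes h :: "'a::field poly"
  assumes hq: "pcompose h q = smult c h" and c0: "c \<noteq> 0" and d: "degree h \<ge> 1"
  shows "\<exists>\<alpha> \<beta>. (\<alpha>, \<beta>) \<in> Pset h \<and> q = [:\<beta>, \<alpha>:]"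
proof -
  have "degree h * degree q = degree h"
    using hq c0 by (simp flip: degree_pcompose)
  hence q1: "degree q = 1" using d by simp
  define \<alpha> \<beta> where "\<alpha> = coeff q 1" and "\<beta> = coeff q 0"
  have q: "q = [:\<beta>, \<alpha>:]"
    using degree_one_form[OF q1] by (simp add: \<alpha>_def \<beta>_def)
  have "q \<noteq> 0" using q1 by auto
  hence "lead_coeff q \<noteq> 0" by simp
  hence a0: "\<alpha> \<noteq> 0" using q1 by (simp add: \<alpha>_def)
  have "lead_coeff (pcompose h q) = lead_coeff h * \<alpha> ^ degree h"
    using q1 by (simp add: lead_coeff_comp \<alpha>_def)
  hence "c * lead_coeff h = lead_coeff h * \<alpha> ^ degree h" using hq c0 by simp
  moreover have "h \<noteq> 0" using d by auto
  ultimately have "c = \<alpha> ^ degree h" by simp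
  thus ?thesis using hq q a0 by (auto simp: Pset_def)
qed

lemma aut_x_affine:
  assumes w: "is_aut h w" and d: "degree h \<ge> 1"
  shows "\<exists>\<alpha> \<beta>. (\<alpha>, \<beta>) \<in> Pset h \<and> w ah_x = ah_const [:\<beta>, \<alpha>:]"
proof -
  have hw: "is_hom h w" using w by (simp add: is_aut_iff)
  obtain c where c0: "c \<noteq> 0" and wh: "w (ah_const h) = ah_const (smult c h)"
    using aut_image_h[OF w] d by fastforce
  have "degree (w ah_x) = 0"
  proof (rule ccontr)
    assume "degree (w ah_x) \<noteq> 0"
    hence "degree (w (ah_const h)) = degree (w ah_x) * degree h" "degree (w ah_x) * degree h > 0"
      using aut_degree_const[OF w] d by auto
    thus False using wh by (simp add: ah_const_def)
  qed
  then obtain q where wx: "w ah_x = ah_const q" by (metis degree_0_id ah_const_def)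
  have "pcompose h q = smult c h"
    using hom_const_pcompose[OF hw wx, of h] wh by (simp add: ah_const_def)
  with pcompose_rescale_Pset[OF _ c0 d] wx show ?thesis by blast
qed

lemma aut_fix_x_degree:
  assumes r: "is_aut h r" and rx: "r ah_x = ah_x"
  shows "degree (r a) = degree (r ah_y) * degree a"
proof (induction a rule: pCons_induct)
  case 0
  show ?case using r hom_0[of h r] by (simp add: is_aut_iff)
next
  case (pCons c a)
  let ?Z = "r ah_y"
  have hr: "is_hom h r" using r by (simp add: is_aut_iff)
  have rc: "r (ah_const p) = ah_const p" for p
    by (rule hom_fix_x_const[OF hr rx])
  show ?case
  proof (cases "a = 0")
    case True then show ?thesis using rc[of c] by (simp add: ah_const_def)
  next
    case False
    have Z0: "?Z \<noteq> 0" using aut_nonzero[OF r] by (simp add: ah_y_def)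
    have e: "r (pCons c a) = ah_const c + ah_mult h (r a) ?Z"
      by (simp add: pCons_as_sum[where h=h] hom_add[OF hr] hom_mult[OF hr] rc)
    have dm: "degree (ah_mult h (r a) ?Z) = degree ?Z * degree a + degree ?Z"
      using mult_degree[OF aut_nonzero[OF r False] Z0, of h] pCons.IH by simp
    show ?thesis
    proof (cases "degree ?Z = 0")
      case True
      have "degree (r (pCons c a)) \<le> max (degree (ah_const c)) (degree (ah_mult h (r a) ?Z))"
        unfolding e by (rule degree_add_le_max)
      then show ?thesis using True dm by (simp add: ah_const_def)
    next
      case False
      have "degree (r (pCons c a)) = degree ?Z * degree a + degree ?Z"
        unfolding e using dm False by (subst degree_add_eq_right) (auto simp: ah_const_def)
      then show ?thesis using \<open>a \<noteq> 0\<close> by (simp add: degree_pCons_eq)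
    qed
  qed
qed

lemma commutator_degree_one:
  "ah_mult h (ah_const g + ah_mult h (ah_const u) ah_y) ah_x
     - ah_mult h ah_x (ah_const g + ah_mult h (ah_const u) ah_y) = ah_const (u * h)"
proof -
  have x_comm: "ah_mult h ah_x (ah_const v) = ah_mult h (ah_const v) ah_x" for v
    by (simp add: x_const mult_const_const mult.commute)
  have "ah_mult h ah_x (ah_const g + ah_mult h (ah_const u) ah_y)
      = ah_mult h (ah_const g) ah_x + ah_mult h (ah_const u) (ah_mult h ah_x ah_y)"
    by (simp only: mult_add_right x_comm mult_assoc[symmetric])
  moreover have "ah_mult h (ah_const g + ah_mult h (ah_const u) ah_y) ah_x
      = ah_mult h (ah_const g) ah_x + ah_mult h (ah_const u) (ah_mult h ah_y ah_x)"
    by (simp only: mult_add_left mult_assoc)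
  ultimately show ?thesis
    by (simp add: mult_diff_right[symmetric] defining_relation[symmetric] mult_const_const)
qed

lemma aut_fix_x:
  assumes r: "is_aut h r" and rx: "r ah_x = ah_x" and d: "degree h \<ge> 1"
  shows "\<exists>g. r = phi_hom h g"
proof -
  have hr: "is_hom h r" using r by (simp add: is_aut_iff)
  obtain a where "r a = ah_y" using r by (metis is_aut_iff bij_is_surj surjD)
  hence "degree (r ah_y) * degree a = 1"
    using aut_fix_x_degree[OF r rx, of a] by (simp add: ah_y_def degree_monom_eq)
  hence "degree (r ah_y) = 1" by simp
  define g u where "g = coeff (r ah_y) 0" and "u = coeff (r ah_y) 1"
  have Z: "r ah_y = ah_const g + ah_mult h (ah_const u) ah_y"
    using degree_one_form[OF \<open>degree (r ah_y) = 1\<close>] pCons_as_sum[of g "[:u:]" h]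
    by (simp add: g_def u_def ah_const_def)
  have "ah_const h = r (ah_const h)" by (simp add: hom_fix_x_const[OF hr rx])
  also have "\<dots> = ah_mult h (r ah_y) ah_x - ah_mult h ah_x (r ah_y)"
    by (subst defining_relation) (simp add: hom_diff[OF hr] hom_mult[OF hr] rx)
  also have "\<dots> = ah_const (u * h)"
    unfolding Z by (rule commutator_degree_one)
  finally have "u = 1" using d by (auto simp: ah_const_def)
  hence "r ah_y = ah_y + ah_const g"
    using Z by (simp add: ah_const_def one_pCons[symmetric] add.commute)
  hence "r = phi_hom h g"
    by (intro hom_eqI[OF hr phi_hom_hom]) (simp_all add: rx phi_hom_x phi_hom_y)
  thus ?thesis by blast
qed

lemma aut_decomposition:
  assumes w: "is_aut h w" and d: "degree h \<ge> 1"
  shows "\<exists>\<alpha> \<beta> g. (\<alpha>, \<beta>) \<in> Pset h \<and> w = phi h g \<circ> tau h \<alpha> \<beta>"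
proof -
  obtain \<alpha> \<beta> where P: "(\<alpha>, \<beta>) \<in> Pset h" and wx: "w ah_x = ah_const [:\<beta>, \<alpha>:]"
    using aut_x_affine[OF w d] by blast
  have a0: "\<alpha> \<noteq> 0" using P by (simp add: Pset_def)
  let ?t = "tau_hom h (1/\<alpha>) (- (\<beta> / \<alpha>))"
  have hw: "is_hom h w" using w by (simp add: is_aut_iff)
  have "(w \<circ> ?t) ah_x = ah_const (pcompose [:- (\<beta> / \<alpha>), 1/\<alpha>:] [:\<beta>, \<alpha>:])"
    by (simp add: tau_hom_x[OF Pset_inv[OF P] d] hom_const_pcompose[OF hw wx])
  also have "\<dots> = ah_x" using a0 by (simp add: pcompose_pCons x_const)
  finally obtain g where g: "w \<circ> ?t = phi_hom h g"
    using aut_fix_x[OF aut_comp[OF w tau_hom_aut[OF Pset_inv[OF P] d]] _ d] by blast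
  have "w = (w \<circ> ?t) \<circ> tau_hom h \<alpha> \<beta>"
    using tau_hom_inverse(2)[OF P d] by (simp add: o_assoc[symmetric])
  hence "w = phi h g \<circ> tau h \<alpha> \<beta>" by (simp add: g phi_eq tau_eq[OF P d])
  thus ?thesis using P by blast
qed

lemma tau_eq_phi_iff:
  assumes P: "(\<alpha>, \<beta>) \<in> Pset h" and d: "degree h \<ge> 1"
  shows "tau h \<alpha> \<beta> = phi h f \<longleftrightarrow> \<alpha> = 1 \<and> \<beta> = 0 \<and> f = 0"
proof
  assume "tau h \<alpha> \<beta> = phi h f"
  hence E: "tau_hom h \<alpha> \<beta> = phi_hom h f" by (simp add: phi_eq tau_eq[OF P d])
  have "ah_const [:\<beta>, \<alpha>:] = ah_x"
    using arg_cong[OF E, of "\<lambda>w. w ah_x"] by (simp only: tau_hom_x[OF P d] phi_hom_x)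
  hence ab: "\<alpha> = 1 \<and> \<beta> = 0" by (simp add: x_const ah_const_def)
  have "ah_scal (\<alpha> ^ (degree h - 1)) ah_y = ah_y + ah_const f"
    using arg_cong[OF E, of "\<lambda>w. w ah_y"] by (simp add: tau_hom_y[OF P d] phi_hom_y)
  hence "f = 0" using ab by (simp add: ah_scal_def one_pCons[symmetric] ah_const_def)
  with ab show "\<alpha> = 1 \<and> \<beta> = 0 \<and> f = 0" by simp
next
  assume "\<alpha> = 1 \<and> \<beta> = 0 \<and> f = 0"
  thus "tau h \<alpha> \<beta> = phi h f"
    by (simp add: tau_eq[OF Pset_one d] phi_eq tau_hom_one[OF d] phi_hom_0)
qed

text \<open>Part (iii): if \<alpha> \<noteq> 1 is an l-th root of unity then 1 + \<alpha> + ... + \<alpha>^(l-1) = 0,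
  so the l-th power of tau_{\<alpha>,\<beta>} is tau_{1,0} = id.\<close>
lemma tau_root_of_unity:
  assumes P: "(\<alpha>, \<beta>) \<in> Pset h" and d: "degree h \<ge> 1" and a1: "\<alpha> \<noteq> 1" and al: "\<alpha> ^ l = 1"
  shows "tau h \<alpha> \<beta> ^^ l = id"
proof -
  have "\<alpha> ^ l - 1 = (\<alpha> - 1) * (\<Sum>i<l. \<alpha> ^ i)" by (rule power_diff_1_eq)
  hence "(\<Sum>i<l. \<alpha> ^ i) = 0" using al a1 by simp
  thus ?thesis using al by (simp add: tau_eq[OF P d] tau_power[OF P d] tau_hom_one[OF d])
qed

section \<open>The group structure\<close>

lemma Aut_group_is_group: "group (Aut_group h)"
proof (rule groupI)
  show "\<exists>y\<in>carrier (Aut_group h). y \<otimes>\<^bsub>Aut_group h\<^esub> x = \<one>\<^bsub>Aut_group h\<^esub>"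
    if "x \<in> carrier (Aut_group h)" for x
    using that aut_inv[of h x] by (auto simp: Aut_group_def is_aut_iff bij_is_inj)
qed (auto simp: Aut_group_def aut_comp aut_id o_assoc)

lemma Aut_group_inv:
  assumes "is_aut h x" "is_aut h y" "y \<circ> x = id"
  shows "inv\<^bsub>Aut_group h\<^esub> x = y"
  using assms by (intro group.inv_equality[OF Aut_group_is_group]) (simp_all add: Aut_group_def)

lemma phi_subgroup: "subgroup (range (phi h)) (Aut_group h)"
proof (rule group.subgroupI[OF Aut_group_is_group])
  show "range (phi h) \<subseteq> carrier (Aut_group h)"
    by (auto simp: Aut_group_def phi_eq phi_hom_aut)
  show "inv\<^bsub>Aut_group h\<^esub> a \<in> range (phi h)" if a_in: "a \<in> range (phi h)" for a
  proof -
    obtain f where a: "a = phi_hom h f" using a_in unfolding phi_eq by blast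
    have "inv\<^bsub>Aut_group h\<^esub> a = phi_hom h (-f)"
      unfolding a by (rule Aut_group_inv) (simp_all add: phi_hom_aut phi_hom_add phi_hom_0)
    thus ?thesis by (simp add: phi_eq)
  qed
qed (auto simp: Aut_group_def phi_eq phi_hom_add)

lemma phi_comm_group: "comm_group ((Aut_group h)\<lparr>carrier := range (phi h)\<rparr>)"
proof (rule group.group_comm_groupI)
  show "group ((Aut_group h)\<lparr>carrier := range (phi h)\<rparr>)"
    by (rule group.subgroup_imp_group[OF Aut_group_is_group phi_subgroup])
  fix x y assume "x \<in> carrier ((Aut_group h)\<lparr>carrier := range (phi h)\<rparr>)"
    and "y \<in> carrier ((Aut_group h)\<lparr>carrier := range (phi h)\<rparr>)"
  then obtain f g where "x = phi h f" "y = phi h g" by auto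
  thus "x \<otimes>\<^bsub>(Aut_group h)\<lparr>carrier := range (phi h)\<rparr>\<^esub> y
      = y \<otimes>\<^bsub>(Aut_group h)\<lparr>carrier := range (phi h)\<rparr>\<^esub> x"
    by (simp add: Aut_group_def phi_add[symmetric] add.commute)
qed

text \<open>\<dots> and it is normal: a conjugate of phi_f fixes x, because every automorphism maps x
  into F[x] and phi_f fixes F[x].\<close>
lemma phi_normal:
  assumes d: "degree h \<ge> 1"
  shows "range (phi h) \<lhd> Aut_group h"
proof -
  have "x \<otimes>\<^bsub>Aut_group h\<^esub> k \<otimes>\<^bsub>Aut_group h\<^esub> inv\<^bsub>Aut_group h\<^esub> x \<in> range (phi h)"
    if x: "x \<in> carrier (Aut_group h)" and k: "k \<in> range (phi h)" for x k
  proof -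
    let ?v = "inv_into UNIV x"
    have xa: "is_aut h x" using x by (simp add: Aut_group_def)
    have va: "is_aut h ?v" by (rule aut_inv[OF xa])
    obtain f where kf: "k = phi_hom h f" using k unfolding phi_eq by blast
    have iv: "inv\<^bsub>Aut_group h\<^esub> x = ?v"
      by (rule Aut_group_inv[OF xa va]) (use xa in \<open>simp add: is_aut_iff bij_is_inj\<close>)
    obtain \<alpha> \<beta> where vx: "?v ah_x = ah_const [:\<beta>, \<alpha>:]" using aut_x_affine[OF va d] by blast
    have "(x \<circ> phi_hom h f \<circ> ?v) ah_x = x (?v ah_x)" by (simp add: vx phi_hom_const)
    also have "\<dots> = ah_x" using xa by (simp add: is_aut_iff bij_is_surj surj_f_inv_f)
    finally obtain g where "x \<circ> phi_hom h f \<circ> ?v = phi_hom h g"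
      using aut_fix_x[OF aut_comp[OF aut_comp[OF xa phi_hom_aut] va] _ d] by blast
    thus ?thesis unfolding iv kf by (simp add: Aut_group_def phi_eq)
  qed
  thus ?thesis using phi_subgroup by (simp add: group.normal_inv_iff[OF Aut_group_is_group])
qed

lemma tau_image:
  assumes d: "degree h \<ge> 1"
  shows "(\<lambda>(\<alpha>, \<beta>). tau h \<alpha> \<beta>) ` Pset h = (\<lambda>(\<alpha>, \<beta>). tau_hom h \<alpha> \<beta>) ` Pset h"
  by (rule image_cong) (auto simp: tau_eq[OF _ d])

lemma tau_subgroup:
  assumes d: "degree h \<ge> 1"
  shows "subgroup ((\<lambda>(\<alpha>, \<beta>). tau h \<alpha> \<beta>) ` Pset h) (Aut_group h)"
  unfolding tau_image[OF d]
proof (rule group.subgroupI[OF Aut_group_is_group])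
  show "(\<lambda>(\<alpha>, \<beta>). tau_hom h \<alpha> \<beta>) ` Pset h \<subseteq> carrier (Aut_group h)"
    by (auto simp: Aut_group_def tau_hom_aut[OF _ d])
  show "(\<lambda>(\<alpha>, \<beta>). tau_hom h \<alpha> \<beta>) ` Pset h \<noteq> {}" using Pset_one by blast
  show "inv\<^bsub>Aut_group h\<^esub> a \<in> (\<lambda>(\<alpha>, \<beta>). tau_hom h \<alpha> \<beta>) ` Pset h"
    if a_in: "a \<in> (\<lambda>(\<alpha>, \<beta>). tau_hom h \<alpha> \<beta>) ` Pset h" for a
  proof -
    obtain \<alpha> \<beta> where P: "(\<alpha>, \<beta>) \<in> Pset h" and a: "a = tau_hom h \<alpha> \<beta>" using a_in by auto
    have "inv\<^bsub>Aut_group h\<^esub> a = tau_hom h (1/\<alpha>) (- (\<beta> / \<alpha>))"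
      unfolding a by (rule Aut_group_inv)
        (simp_all add: tau_hom_aut[OF P d] tau_hom_aut[OF Pset_inv[OF P] d] tau_hom_inverse[OF P d])
    thus ?thesis using Pset_inv[OF P] by force
  qed
  show "a \<otimes>\<^bsub>Aut_group h\<^esub> b \<in> (\<lambda>(\<alpha>, \<beta>). tau_hom h \<alpha> \<beta>) ` Pset h"
    if ab_in: "a \<in> (\<lambda>(\<alpha>, \<beta>). tau_hom h \<alpha> \<beta>) ` Pset h"
      "b \<in> (\<lambda>(\<alpha>, \<beta>). tau_hom h \<alpha> \<beta>) ` Pset h" for a b
  proof -
    obtain \<alpha> \<beta> \<alpha>' \<beta>' where P: "(\<alpha>, \<beta>) \<in> Pset h" and P': "(\<alpha>', \<beta>') \<in> Pset h"
      and ab: "a = tau_hom h \<alpha> \<beta>" "b = tau_hom h \<alpha>' \<beta>'"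
      using ab_in by auto
    have "a \<otimes>\<^bsub>Aut_group h\<^esub> b = tau_hom h (\<alpha> * \<alpha>') (\<beta>' + \<alpha>' * \<beta>)"
      by (simp add: Aut_group_def ab tau_hom_comp[OF P P' d])
    thus ?thesis using Pset_mult[OF P P'] by force
  qed
qed

lemma phi_tau_inter:
  assumes d: "degree h \<ge> 1"
  shows "range (phi h) \<inter> (\<lambda>(\<alpha>, \<beta>). tau h \<alpha> \<beta>) ` Pset h = {id}"
proof
  show "range (phi h) \<inter> (\<lambda>(\<alpha>, \<beta>). tau h \<alpha> \<beta>) ` Pset h \<subseteq> {id}"
  proof
    fix w assume w_in: "w \<in> range (phi h) \<inter> (\<lambda>(\<alpha>, \<beta>). tau h \<alpha> \<beta>) ` Pset h"
    obtain f where w: "w = phi h f" using w_in by blast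
    obtain \<alpha> \<beta> where P: "(\<alpha>, \<beta>) \<in> Pset h" and "w = tau h \<alpha> \<beta>" using w_in by auto
    hence "f = 0" using tau_eq_phi_iff[OF P d, of f] w by simp
    thus "w \<in> {id}" using w by (simp add: phi_eq phi_hom_0)
  qed
  have "id = phi h 0" "id = tau h 1 0"
    by (simp_all add: phi_eq phi_hom_0 tau_eq[OF Pset_one d] tau_hom_one[OF d])
  thus "{id} \<subseteq> range (phi h) \<inter> (\<lambda>(\<alpha>, \<beta>). tau h \<alpha> \<beta>) ` Pset h"
    using Pset_one by force
qed

lemma phi_tau_product:
  assumes d: "degree h \<ge> 1"
  shows "range (phi h) <#>\<^bsub>Aut_group h\<^esub> ((\<lambda>(\<alpha>, \<beta>). tau h \<alpha> \<beta>) ` Pset h) = carrier (Aut_group h)"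
proof
  show "range (phi h) <#>\<^bsub>Aut_group h\<^esub> ((\<lambda>(\<alpha>, \<beta>). tau h \<alpha> \<beta>) ` Pset h) \<subseteq> carrier (Aut_group h)"
    unfolding tau_image[OF d]
    by (auto simp: set_mult_def Aut_group_def phi_eq intro!: aut_comp phi_hom_aut tau_hom_aut[OF _ d])
  show "carrier (Aut_group h) \<subseteq> range (phi h) <#>\<^bsub>Aut_group h\<^esub> ((\<lambda>(\<alpha>, \<beta>). tau h \<alpha> \<beta>) ` Pset h)"
  proof
    fix w assume "w \<in> carrier (Aut_group h)"
    hence "is_aut h w" by (simp add: Aut_group_def)
    then obtain \<alpha> \<beta> f where "(\<alpha>, \<beta>) \<in> Pset h" "w = phi h f \<circ> tau h \<alpha> \<beta>"
      using aut_decomposition[OF _ d] by blast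
    thus "w \<in> range (phi h) <#>\<^bsub>Aut_group h\<^esub> ((\<lambda>(\<alpha>, \<beta>). tau h \<alpha> \<beta>) ` Pset h)"
      unfolding set_mult_def by (force simp: Aut_group_def)
  qed
qed

theorem theorem8p3:
  fixes h :: "'a::field poly"
  assumes "degree h \<ge> 1"
  shows
    "(\<forall>w. is_aut h w \<longrightarrow> (\<exists>\<alpha> \<beta> f. (\<alpha>, \<beta>) \<in> Pset h \<and> w = phi h f \<circ> tau h \<alpha> \<beta>))
   \<and> (\<forall>\<alpha> \<beta> f. (\<alpha>, \<beta>) \<in> Pset h \<longrightarrow>
        (tau h \<alpha> \<beta> = phi h f \<longleftrightarrow> \<alpha> = 1 \<and> \<beta> = 0 \<and> f = 0))
   \<and> (\<forall>\<alpha> \<beta> (l::nat). (\<alpha>, \<beta>) \<in> Pset h \<and> \<alpha> \<noteq> 1 \<and> l \<ge> 2 \<and> \<alpha> ^ l = 1 \<longrightarrow>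
        tau h \<alpha> \<beta> ^^ l = id)
   \<and> (\<forall>f g. phi h (f + g) = phi h f \<circ> phi h g) \<and> inj (phi h)
   \<and> comm_group ((Aut_group h)\<lparr>carrier := range (phi h)\<rparr>)
   \<and> range (phi h) \<lhd> Aut_group h
   \<and> subgroup ((\<lambda>(\<alpha>, \<beta>). tau h \<alpha> \<beta>) ` Pset h) (Aut_group h)
   \<and> range (phi h) \<inter> (\<lambda>(\<alpha>, \<beta>). tau h \<alpha> \<beta>) ` Pset h = {id}
   \<and> range (phi h) <#>\<^bsub>Aut_group h\<^esub> ((\<lambda>(\<alpha>, \<beta>). tau h \<alpha> \<beta>) ` Pset h) = carrier (Aut_group h)"
proof (intro conjI allI impI)
  show "\<exists>\<alpha> \<beta> f. (\<alpha>, \<beta>) \<in> Pset h \<and> w = phi h f \<circ> tau h \<alpha> \<beta>" if "is_aut h w" for w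
    by (rule aut_decomposition[OF that assms])
  show "tau h \<alpha> \<beta> = phi h f \<longleftrightarrow> \<alpha> = 1 \<and> \<beta> = 0 \<and> f = 0" if "(\<alpha>, \<beta>) \<in> Pset h" for \<alpha> \<beta> f
    by (rule tau_eq_phi_iff[OF that assms])
  show "tau h \<alpha> \<beta> ^^ l = id" if "(\<alpha>, \<beta>) \<in> Pset h \<and> \<alpha> \<noteq> 1 \<and> l \<ge> 2 \<and> \<alpha> ^ l = 1"
    for \<alpha> \<beta> and l :: nat
    using tau_root_of_unity[OF _ assms] that by blast
qed (simp_all add: phi_add phi_inj phi_comm_group phi_normal[OF assms] tau_subgroup[OF assms]
       phi_tau_inter[OF assms] phi_tau_product[OF assms])

end
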